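(* Let $0<a\le 1$ and let $x^1,\dots,x^T\in[a,1]^N$ be price relative vectors with $\max_i x^t_i=1$ for all $t$. Let $w^1\in\Delta^N$ have all entries positive, let $0<\eta\le 1$, and define $$w^{t+1}=w^t\odot\big(\mathbb{1}-\eta\,\Pi_{w^t}\nabla f^t\big),\qquad \nabla f^t=-\frac{x^t}{w^t\cdot x^t},\qquad (\Pi_{w^t}\nabla f^t)_i=\nabla_i f^t-w^t\cdot\nabla f^t.$$ Then for every $u\in\Delta^N$, $$\sum_{t=1}^T\log(u\cdot x^t)-\sum_{t=1}^T\log(w^t\cdot x^t)\le\frac{D(u\,|\,w^1)}{\eta}+\frac{T\eta}{2a^2(1-\eta)}.$$ In particular, taking $w^1=(1/N,\ldots,1/N)$ and $\eta=\frac{a\sqrt{2\log N}}{a\sqrt{2\log N}+\sqrt{T}}$ gives, for every $u\in\Delta^N$, $$\sum_{t=1}^T\log(u\cdot x^t)-\sum_{t=1}^T\log(w^t\cdot x^t)\le\frac{\sqrt{2T\log N}}{a}+\log N.$$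
   Context: $\Delta^N=\{w\in\mathbb{R}^N : \sum_i w_i=1,\ w_i\ge 0\}$; $\odot$ is componentwise multiplication and $\mathbb{1}$ the all-ones vector. The relative entropy is $D(u\,|\,w)=\sum_{i:\,u_i\ne0}u_i\log(u_i/w_i)$. *)

theory Defs
  imports "HOL-Analysis.Analysis"
begin

text \<open>Vectors in R^N are represented as functions nat => real, only the
  coordinates i < N being relevant.\<close>

definition prob_simplex :: "nat \<Rightarrow> (nat \<Rightarrow> real) set" where
  "prob_simplex N = {w. (\<forall>i<N. 0 \<le> w i) \<and> (\<Sum>i<N. w i) = 1}"

definition dotp :: "nat \<Rightarrow> (nat \<Rightarrow> real) \<Rightarrow> (nat \<Rightarrow> real) \<Rightarrow> real" where
  "dotp N u v = (\<Sum>i<N. u i * v i)"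

definition relent :: "nat \<Rightarrow> (nat \<Rightarrow> real) \<Rightarrow> (nat \<Rightarrow> real) \<Rightarrow> real" where
  "relent N u w = (\<Sum>i\<in>{i. i < N \<and> u i \<noteq> 0}. u i * ln (u i / w i))"

text \<open>Gradient of f^t(w) = - log(w . x): grad_i = - x_i / (w . x).\<close>
definition grad :: "nat \<Rightarrow> (nat \<Rightarrow> real) \<Rightarrow> (nat \<Rightarrow> real) \<Rightarrow> (nat \<Rightarrow> real)" where
  "grad N w xt = (\<lambda>i. - xt i / dotp N w xt)"

definition proj :: "nat \<Rightarrow> (nat \<Rightarrow> real) \<Rightarrow> (nat \<Rightarrow> real) \<Rightarrow> (nat \<Rightarrow> real)" where
  "proj N w g = (\<lambda>i. g i - dotp N w g)"

text \<open>Weights, 0-based in time: eg_w N \<eta> x w1 0 = w^1 and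
  eg_w N \<eta> x w1 (Suc t) is obtained from eg_w N \<eta> x w1 t using price vector x t,
  i.e. eg_w ... t corresponds to w^{t+1} and x t to x^{t+1}.\<close>
primrec eg_w :: "nat \<Rightarrow> real \<Rightarrow> (nat \<Rightarrow> nat \<Rightarrow> real) \<Rightarrow> (nat \<Rightarrow> real) \<Rightarrow> nat \<Rightarrow> (nat \<Rightarrow> real)" where
  "eg_w N \<eta> x w1 0 = w1"
| "eg_w N \<eta> x w1 (Suc t) =
     (let w = eg_w N \<eta> x w1 t in
      (\<lambda>i. w i * (1 - \<eta> * proj N w (grad N w (x t)) i)))"

end

(*
  The relative entropy D(u | w^t) is a potential. One step multiplies w_i by 1 + eta (r_i - 1)
  with r_i = x_i / (w . x), and r_i lies in [a, 1/a]; so D drops by sum_i u_i log(1 + eta (r_i - 1)).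
  Since log(1 + z) >= z - z^2 / (2 (1 - eta)) for z >= -eta, and log(u . x / w . x) <= sum_i u_i (r_i - 1),
  the regret of one round is at most the drop of D divided by eta plus eta / (2 a^2 (1 - eta)).
  Summing telescopes, and D(u | w^(T+1)) >= 0 by Gibbs' inequality. For the uniform start
  D(u | w^1) <= log N, and the chosen eta balances log N / eta against T eta / (2 a^2 (1 - eta)).
*)
theory Submission
  imports Defs
begin

lemma ln_add_one_ge_quadratic:
  fixes z c :: real
  assumes "0 < c" "c \<le> 1" "c \<le> 1 + z"
  shows "z - z\<^sup>2 / (2 * c) \<le> ln (1 + z)"
proof -
  define f where "f y = ln (1 + y) - y + y\<^sup>2 / (2 * c)" for y :: real
  have deriv: "(f has_real_derivative y * (1 / c - 1 / (1 + y))) (at y)" if "c \<le> 1 + y" for y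
  proof -
    have "0 < 1 + y" using that assms(1) by linarith
    then show ?thesis
      unfolding f_def using assms(1)
      by (auto intro!: derivative_eq_intros simp: divide_simps power2_eq_square) (simp add: algebra_simps)
  qed
  have slope: "0 \<le> 1 / c - 1 / (1 + y)" if "c \<le> 1 + y" for y
    using that assms(1) by (simp add: frac_le)
  have "f 0 \<le> f z"
  proof (cases "0 \<le> z")
    case True
    show ?thesis
    proof (rule DERIV_nonneg_imp_nondecreasing[OF True])
      fix y assume "0 \<le> y" "y \<le> z"
      then show "\<exists>d. (f has_real_derivative d) (at y) \<and> 0 \<le> d"
        using deriv slope assms(2)
        by (intro exI[of _ "y * (1 / c - 1 / (1 + y))"] conjI mult_nonneg_nonneg) auto
    qed
  next
    case False
    show ?thesis
    proof (rule DERIV_nonpos_imp_nonincreasing[of z 0])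
      fix y assume "z \<le> y" "y \<le> 0"
      then show "\<exists>d. (f has_real_derivative d) (at y) \<and> d \<le> 0"
        using deriv slope assms(3)
        by (intro exI[of _ "y * (1 / c - 1 / (1 + y))"] conjI mult_nonpos_nonneg) auto
    qed (use False in auto)
  qed
  then show ?thesis by (simp add: f_def)
qed

lemma ln_eg_factor_ge:
  fixes \<eta> a r :: real
  assumes "0 < \<eta>" "\<eta> < 1" "0 < a" "a \<le> 1" "a \<le> r" "r \<le> 1 / a"
  shows "\<eta> * (r - 1) \<le> ln (1 - \<eta> + \<eta> * r) + \<eta>\<^sup>2 / (2 * a\<^sup>2 * (1 - \<eta>))"
proof -
  define z where "z = \<eta> * (r - 1)"
  have "1 \<le> 1 / a"
    using assms(3,4) by simp
  then have "\<bar>r - 1\<bar> \<le> 1 / a"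
    using assms(3,5,6) unfolding abs_le_iff by (intro conjI) linarith+
  then have "(r - 1)\<^sup>2 \<le> (1 / a)\<^sup>2"
    by (metis abs_ge_zero power2_abs power_mono)
  then have "\<eta>\<^sup>2 * (r - 1)\<^sup>2 \<le> \<eta>\<^sup>2 * (1 / a)\<^sup>2"
    by (intro mult_left_mono) auto
  then have "z\<^sup>2 \<le> \<eta>\<^sup>2 / a\<^sup>2"
    by (simp add: z_def power_mult_distrib power_divide)
  then have "z\<^sup>2 / (2 * (1 - \<eta>)) \<le> \<eta>\<^sup>2 / a\<^sup>2 / (2 * (1 - \<eta>))"
    using assms(2) by (intro divide_right_mono) auto
  then have square: "z\<^sup>2 / (2 * (1 - \<eta>)) \<le> \<eta>\<^sup>2 / (2 * a\<^sup>2 * (1 - \<eta>))"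
    by (simp add: algebra_simps)
  have "1 - \<eta> \<le> 1 + z"
    using assms by (simp add: z_def algebra_simps)
  then have "z - z\<^sup>2 / (2 * (1 - \<eta>)) \<le> ln (1 + z)"
    using assms(1,2) by (intro ln_add_one_ge_quadratic) auto
  with square show ?thesis
    by (simp add: z_def algebra_simps)
qed

definition pos_simplex :: "nat \<Rightarrow> (nat \<Rightarrow> real) set" where
  "pos_simplex N = {w \<in> prob_simplex N. \<forall>i<N. 0 < w i}"

lemma sum_over_support:
  fixes N :: nat and u g :: "nat \<Rightarrow> real"
  shows "(\<Sum>i\<in>{i. i < N \<and> u i \<noteq> 0}. u i * g i) = (\<Sum>i<N. u i * g i)"
  by (rule sum.mono_neutral_left) auto

lemma dotp_simplex_bounds:
  assumes "w \<in> prob_simplex N" "\<And>i. i < N \<Longrightarrow> a \<le> xt i \<and> xt i \<le> b"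
  shows "a \<le> dotp N w xt \<and> dotp N w xt \<le> b"
proof -
  have w: "\<And>i. i < N \<Longrightarrow> 0 \<le> w i" "(\<Sum>i<N. w i) = 1"
    using assms(1) by (auto simp: prob_simplex_def)
  have "(\<Sum>i<N. w i * a) \<le> dotp N w xt" "dotp N w xt \<le> (\<Sum>i<N. w i * b)"
    unfolding dotp_def using w(1) assms(2) by (auto intro!: sum_mono mult_left_mono)
  then show ?thesis
    using w(2) by (simp add: sum_distrib_right[symmetric])
qed

lemma dotp_pos_simplex_pos:
  assumes "w \<in> pos_simplex N" "\<And>i. i < N \<Longrightarrow> 0 < xt i"
  shows "0 < dotp N w xt"
proof -
  have "N \<noteq> 0"
    using assms(1) by (cases "N = 0") (auto simp: pos_simplex_def prob_simplex_def)
  then show ?thesis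
    using assms unfolding dotp_def pos_simplex_def by (intro sum_pos) auto
qed

lemma dotp_grad:
  assumes "dotp N w xt \<noteq> 0"
  shows "dotp N w (grad N w xt) = -1"
proof -
  have "dotp N w (grad N w xt) = - (dotp N w xt / dotp N w xt)"
    by (simp add: dotp_def grad_def sum_divide_distrib[symmetric] sum_negf)
  then show ?thesis
    using assms by simp
qed

definition eg_update :: "nat \<Rightarrow> real \<Rightarrow> (nat \<Rightarrow> real) \<Rightarrow> (nat \<Rightarrow> real) \<Rightarrow> (nat \<Rightarrow> real)" where
  "eg_update N \<eta> w xt = (\<lambda>i. w i * (1 - \<eta> + \<eta> * (xt i / dotp N w xt)))"

lemma eg_w_Suc_eq_eg_update:
  assumes "dotp N (eg_w N \<eta> x w1 t) (x t) \<noteq> 0"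
  shows "eg_w N \<eta> x w1 (Suc t) = eg_update N \<eta> (eg_w N \<eta> x w1 t) (x t)"
  using dotp_grad[OF assms]
  by (simp add: eg_update_def Let_def proj_def grad_def algebra_simps)

lemma eg_update_pos_simplex:
  assumes "w \<in> pos_simplex N" "\<And>i. i < N \<Longrightarrow> 0 < xt i" "0 \<le> \<eta>" "\<eta> \<le> 1"
  shows "eg_update N \<eta> w xt \<in> pos_simplex N"
proof -
  define d where "d = dotp N w xt"
  have d: "0 < d"
    unfolding d_def using assms(1,2) by (rule dotp_pos_simplex_pos)
  have w: "\<And>i. i < N \<Longrightarrow> 0 < w i" "(\<Sum>i<N. w i) = 1"
    using assms(1) by (auto simp: pos_simplex_def prob_simplex_def)
  have factor: "0 < 1 - \<eta> + \<eta> * (xt i / d)" if "i < N" for i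
  proof -
    have "0 < xt i / d"
      using assms(2)[OF that] d by simp
    moreover have "0 \<le> \<eta> * (xt i / d)"
      using calculation assms(3) by (intro mult_nonneg_nonneg) auto
    ultimately show ?thesis
      using assms(4) by (cases "\<eta> = 1") (simp, linarith)
  qed
  have "(\<Sum>i<N. w i * (1 - \<eta> + \<eta> * (xt i / d)))
      = (\<Sum>i<N. (1 - \<eta>) * w i + \<eta> / d * (w i * xt i))"
    by (simp add: algebra_simps)
  also have "\<dots> = (1 - \<eta>) * (\<Sum>i<N. w i) + \<eta> / d * (\<Sum>i<N. w i * xt i)"
    by (simp add: sum.distrib sum_distrib_left)
  also have "\<dots> = 1"
    using w(2) d by (simp add: d_def dotp_def)
  finally show ?thesis
    using w(1) factor
    by (auto simp: pos_simplex_def prob_simplex_def eg_update_def d_def[symmetric] less_imp_le)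
qed

lemma eg_w_pos_simplex:
  assumes "w1 \<in> pos_simplex N" "0 \<le> \<eta>" "\<eta> \<le> 1"
    and "\<And>t i. t < T \<Longrightarrow> i < N \<Longrightarrow> 0 < x t i"
  shows "t \<le> T \<Longrightarrow> eg_w N \<eta> x w1 t \<in> pos_simplex N"
proof (induction t)
  case 0
  then show ?case using assms(1) by simp
next
  case (Suc t)
  then have "eg_w N \<eta> x w1 t \<in> pos_simplex N" "\<And>i. i < N \<Longrightarrow> 0 < x t i"
    using assms(4) by auto
  moreover from this have "dotp N (eg_w N \<eta> x w1 t) (x t) \<noteq> 0"
    using dotp_pos_simplex_pos by force
  ultimately show ?case
    using assms(2,3) by (simp add: eg_w_Suc_eq_eg_update eg_update_pos_simplex del: eg_w.simps)
qed

lemma eg_w_eta_zero: "eg_w N 0 x w1 t = w1"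
  by (induction t) (simp_all add: Let_def)

lemma relent_diff:
  assumes "\<forall>i<N. 0 \<le> u i" "\<forall>i<N. 0 < w i" "\<forall>i<N. 0 < w' i"
  shows "relent N u w - relent N u w' = (\<Sum>i<N. u i * ln (w' i / w i))"
proof -
  have "relent N u w - relent N u w' = (\<Sum>i\<in>{i. i < N \<and> u i \<noteq> 0}. u i * ln (w' i / w i))"
    unfolding relent_def sum_subtractf[symmetric]
  proof (rule sum.cong)
    fix i assume "i \<in> {i. i < N \<and> u i \<noteq> 0}"
    then have "0 < u i" "0 < w i" "0 < w' i"
      using assms by (auto simp: less_le)
    then show "u i * ln (u i / w i) - u i * ln (u i / w' i) = u i * ln (w' i / w i)"
      by (simp add: ln_div algebra_simps)
  qed simp
  then show ?thesis
    by (simp add: sum_over_support)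
qed

lemma relent_nonneg:
  assumes "u \<in> prob_simplex N" "w \<in> pos_simplex N"
  shows "0 \<le> relent N u w"
proof -
  define S where "S = {i. i < N \<and> u i \<noteq> 0}"
  have u: "\<forall>i<N. 0 \<le> u i" "(\<Sum>i\<in>S. u i) = 1"
    using assms(1) sum_over_support[where u = u and g = "\<lambda>_. 1"] by (auto simp: prob_simplex_def S_def)
  have w: "\<forall>i<N. 0 < w i" "(\<Sum>i<N. w i) = 1"
    using assms(2) by (auto simp: pos_simplex_def prob_simplex_def)
  have pos: "0 < u i" "0 < w i" if "i \<in> S" for i
    using that u(1) w(1) by (auto simp: S_def less_le)
  have "- relent N u w = (\<Sum>i\<in>S. u i * ln (w i / u i))"
    unfolding relent_def S_def[symmetric] sum_negf[symmetric]
    using pos by (intro sum.cong) (simp_all add: ln_div algebra_simps)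
  also have "\<dots> \<le> (\<Sum>i\<in>S. u i * (w i / u i - 1))"
    using pos by (intro sum_mono mult_left_mono ln_le_minus_one) (auto intro: less_imp_le)
  also have "\<dots> = (\<Sum>i\<in>S. w i - u i)"
    by (intro sum.cong) (auto simp: S_def field_simps)
  also have "\<dots> = (\<Sum>i\<in>S. w i) - 1"
    using u(2) by (simp add: sum_subtractf)
  also have "(\<Sum>i\<in>S. w i) \<le> (\<Sum>i<N. w i)"
    using w(1) by (intro sum_mono2) (auto simp: S_def less_imp_le)
  finally show ?thesis
    using w(2) by simp
qed

lemma relent_uniform_le:
  assumes "u \<in> prob_simplex N"
  shows "relent N u (\<lambda>i. 1 / real N) \<le> ln (real N)"
proof -
  define S where "S = {i. i < N \<and> u i \<noteq> 0}"
  have u: "\<forall>i<N. 0 \<le> u i" "(\<Sum>i<N. u i) = 1"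
    using assms by (auto simp: prob_simplex_def)
  have "relent N u (\<lambda>i. 1 / real N) = (\<Sum>i\<in>S. u i * ln (u i * real N))"
    by (simp add: relent_def S_def)
  also have "\<dots> \<le> (\<Sum>i\<in>S. u i * ln (real N))"
  proof (intro sum_mono mult_left_mono)
    fix i assume i: "i \<in> S"
    then have "0 < u i" "u i \<le> (\<Sum>j<N. u j)"
      using u(1) by (auto simp: S_def less_le intro: member_le_sum)
    then show "ln (u i * real N) \<le> ln (real N)" "0 \<le> u i"
      using i u(2) by (auto simp: S_def)
  qed
  also have "\<dots> = (\<Sum>i<N. u i * ln (real N))"
    unfolding S_def by (rule sum_over_support)
  also have "\<dots> = ln (real N)"
    using u(2) by (simp add: sum_distrib_right[symmetric])
  finally show ?thesis .
qed

lemma eg_update_regret_step: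
  assumes "0 < \<eta>" "\<eta> < 1" "0 < a" "a \<le> 1"
    and "w \<in> pos_simplex N" "u \<in> prob_simplex N"
    and x: "\<And>i. i < N \<Longrightarrow> a \<le> xt i \<and> xt i \<le> 1"
  shows "ln (dotp N u xt) - ln (dotp N w xt)
    \<le> (relent N u w - relent N u (eg_update N \<eta> w xt)) / \<eta> + \<eta> / (2 * a\<^sup>2 * (1 - \<eta>))"
proof -
  define d where "d = dotp N w xt"
  define c where "c = \<eta> / (2 * a\<^sup>2 * (1 - \<eta>))"
  have w: "w \<in> prob_simplex N" "\<forall>i<N. 0 < w i"
    using assms(5) by (auto simp: pos_simplex_def)
  have u: "\<forall>i<N. 0 \<le> u i" "(\<Sum>i<N. u i) = 1"
    using assms(6) by (auto simp: prob_simplex_def)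
  have d: "a \<le> d" "d \<le> 1"
    using dotp_simplex_bounds[OF w(1) x] by (auto simp: d_def)
  have ux: "a \<le> dotp N u xt"
    using dotp_simplex_bounds[OF assms(6) x] by simp
  have ratio: "a \<le> xt i / d \<and> xt i / d \<le> 1 / a" if "i < N" for i
  proof -
    have "a * d \<le> a" "xt i * a \<le> a"
      using x[OF that] d assms(3) by (simp_all add: mult_left_le mult_left_le_one_le)
    then have "a * d \<le> xt i" "xt i * a \<le> d"
      using x[OF that] d by linarith+
    then show ?thesis
      using d assms(3) by (auto simp: field_simps)
  qed
  have w': "eg_update N \<eta> w xt \<in> pos_simplex N"
    using assms(1-3,5) x by (intro eg_update_pos_simplex) (auto intro: less_le_trans)
  have "ln (dotp N u xt) - ln d = ln (dotp N u xt / d)"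
    using d ux assms(3) by (simp add: ln_div)
  also have "\<dots> \<le> dotp N u xt / d - 1"
    using d ux assms(3) by (intro ln_le_minus_one) simp
  also have "\<dots> = (\<Sum>i<N. u i * (xt i / d - 1))"
    using u(2) by (simp add: dotp_def sum_subtractf sum_divide_distrib algebra_simps)
  also have "\<dots> \<le> (\<Sum>i<N. u i * (ln (1 - \<eta> + \<eta> * (xt i / d)) / \<eta> + c))"
  proof (intro sum_mono mult_left_mono)
    fix i assume "i \<in> {..<N}"
    then have "\<eta> * (xt i / d - 1) \<le> ln (1 - \<eta> + \<eta> * (xt i / d)) + \<eta>\<^sup>2 / (2 * a\<^sup>2 * (1 - \<eta>))"
      using ratio by (intro ln_eg_factor_ge[OF assms(1-4)]) auto
    also have "\<eta>\<^sup>2 / (2 * a\<^sup>2 * (1 - \<eta>)) = \<eta> * c"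
      by (simp add: c_def power2_eq_square)
    finally have "\<eta> * (xt i / d - 1) \<le> ln (1 - \<eta> + \<eta> * (xt i / d)) + \<eta> * c" .
    then show "xt i / d - 1 \<le> ln (1 - \<eta> + \<eta> * (xt i / d)) / \<eta> + c"
      using assms(1) by (simp add: field_simps)
  qed (use u(1) in auto)
  also have "\<dots> = (\<Sum>i<N. u i * ln (1 - \<eta> + \<eta> * (xt i / d))) / \<eta> + c"
    using u(2) by (simp add: distrib_left sum.distrib sum_divide_distrib sum_distrib_right[symmetric])
  also have "(\<Sum>i<N. u i * ln (1 - \<eta> + \<eta> * (xt i / d))) = (\<Sum>i<N. u i * ln (eg_update N \<eta> w xt i / w i))"
    using w(2) by (intro sum.cong) (auto simp: eg_update_def d_def)
  also have "(\<Sum>i<N. u i * ln (eg_update N \<eta> w xt i / w i)) = relent N u w - relent N u (eg_update N \<eta> w xt)"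
    using u(1) w(2) w' by (intro relent_diff[symmetric]) (auto simp: pos_simplex_def)
  finally show ?thesis
    by (simp add: d_def c_def)
qed

lemma eg_regret_bound:
  fixes x :: "nat \<Rightarrow> nat \<Rightarrow> real"
  assumes "0 < \<eta>" "\<eta> < 1" "0 < a" "a \<le> 1"
    and x: "\<And>t i. t < T \<Longrightarrow> i < N \<Longrightarrow> a \<le> x t i \<and> x t i \<le> 1"
    and "w1 \<in> pos_simplex N" "u \<in> prob_simplex N"
  shows "(\<Sum>t<T. ln (dotp N u (x t))) - (\<Sum>t<T. ln (dotp N (eg_w N \<eta> x w1 t) (x t)))
    \<le> relent N u w1 / \<eta> + real T * \<eta> / (2 * a\<^sup>2 * (1 - \<eta>))"
proof -
  define W where "W = eg_w N \<eta> x w1"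
  define R where "R t = relent N u (W t)" for t
  define c where "c = \<eta> / (2 * a\<^sup>2 * (1 - \<eta>))"
  have "\<And>t i. t < T \<Longrightarrow> i < N \<Longrightarrow> 0 < x t i"
    using x assms(3) by (meson less_le_trans)
  then have W: "W t \<in> pos_simplex N" if "t \<le> T" for t
    unfolding W_def using assms(1,2,6) that by (intro eg_w_pos_simplex) auto
  have step: "ln (dotp N u (x t)) - ln (dotp N (W t) (x t)) \<le> (R t - R (Suc t)) / \<eta> + c"
    if "t < T" for t
  proof -
    have "a \<le> dotp N (W t) (x t)"
      using dotp_simplex_bounds[of "W t" N a "x t" 1] W[of t] x that by (auto simp: pos_simplex_def)
    then have "W (Suc t) = eg_update N \<eta> (W t) (x t)"
      unfolding W_def using assms(3) by (intro eg_w_Suc_eq_eg_update) auto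
    then show ?thesis
      using eg_update_regret_step[OF assms(1-4) W[of t] assms(7)] x that by (simp add: R_def c_def)
  qed
  have "(\<Sum>t<T. ln (dotp N u (x t))) - (\<Sum>t<T. ln (dotp N (W t) (x t)))
      = (\<Sum>t<T. ln (dotp N u (x t)) - ln (dotp N (W t) (x t)))"
    by (simp add: sum_subtractf)
  also have "\<dots> \<le> (\<Sum>t<T. (R t - R (Suc t)) / \<eta> + c)"
    by (intro sum_mono step) auto
  also have "\<dots> = (R 0 - R T) / \<eta> + real T * c"
    by (simp add: sum.distrib sum_divide_distrib[symmetric] sum_lessThan_telescope')
  also have "\<dots> \<le> R 0 / \<eta> + real T * c"
    using relent_nonneg[OF assms(7) W[of T]] assms(1) by (simp add: R_def divide_right_mono)
  finally show ?thesis
    by (simp add: R_def W_def c_def)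
qed

lemma tuned_learning_rate:
  fixes a L T :: real
  assumes "0 < a" "0 < L" "0 < T"
  defines "\<eta> \<equiv> a * sqrt (2 * L) / (a * sqrt (2 * L) + sqrt T)"
  shows "0 < \<eta>" "\<eta> < 1" "L / \<eta> + T * \<eta> / (2 * a\<^sup>2 * (1 - \<eta>)) = sqrt (2 * T * L) / a + L"
proof -
  define q where "q = sqrt (2 * L)"
  define s where "s = sqrt T"
  have q: "0 < q" "q\<^sup>2 = 2 * L" and s: "0 < s" "s\<^sup>2 = T"
    using assms(2,3) by (simp_all add: q_def s_def)
  have \<eta>1: "\<eta> = a * q / (a * q + s)"
    by (simp add: \<eta>_def q_def s_def)
  have aq: "0 < a * q"
    using assms(1) q(1) by simp
  then have den: "0 < a * q + s"
    using s(1) by linarith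
  then have \<eta>2: "1 - \<eta> = s / (a * q + s)"
    using \<eta>1 by (simp add: divide_simps algebra_simps)
  show "0 < \<eta>" "\<eta> < 1"
    using aq den s(1) by (simp_all add: \<eta>1 divide_simps)
  have "T * \<eta> / (2 * a\<^sup>2 * (1 - \<eta>)) = s\<^sup>2 * (a * q / (a * q + s)) / (2 * a\<^sup>2 * (s / (a * q + s)))"
    unfolding \<eta>2 s(2) by (simp add: \<eta>1)
  also have "\<dots> = s * q / (2 * a)"
    using assms(1) den s(1) by (simp add: divide_simps power2_eq_square)
  moreover have "L / \<eta> = L + s * q / (2 * a)"
    using assms(1) q s(1) by (simp add: \<eta>1 field_simps power2_eq_square)
  moreover have "sqrt (2 * T * L) = s * q"
    by (simp add: s_def q_def real_sqrt_mult[symmetric] mult_ac)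
  ultimately show "L / \<eta> + T * \<eta> / (2 * a\<^sup>2 * (1 - \<eta>)) = sqrt (2 * T * L) / a + L"
    by (simp add: field_simps)
qed

lemma eg_regret_bound_tuned:
  fixes x :: "nat \<Rightarrow> nat \<Rightarrow> real"
  assumes "0 < a" "a \<le> 1"
    and x: "\<And>t i. t < T \<Longrightarrow> i < N \<Longrightarrow> a \<le> x t i \<and> x t i \<le> 1"
    and u: "u \<in> prob_simplex N"
  defines "\<eta> \<equiv> a * sqrt (2 * ln (real N)) / (a * sqrt (2 * ln (real N)) + sqrt (real T))"
  shows "(\<Sum>t<T. ln (dotp N u (x t))) - (\<Sum>t<T. ln (dotp N (eg_w N \<eta> x (\<lambda>i. 1 / real N) t) (x t)))
    \<le> sqrt (2 * real T * ln (real N)) / a + ln (real N)"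
proof -
  have "N \<noteq> 0"
    using u by (cases "N = 0") (auto simp: prob_simplex_def)
  then consider "T = 0" | "N = 1" | "0 < T" "1 < N"
    by linarith
  then show ?thesis
  proof cases
    case 1
    then show ?thesis
      using \<open>N \<noteq> 0\<close> by simp
  next
    case 2
    then have "\<eta> = 0"
      by (simp add: \<eta>_def)
    then show ?thesis
      using 2 u by (simp add: eg_w_eta_zero dotp_def prob_simplex_def)
  next
    case 3
    then have "0 < ln (real N)" "0 < real T"
      by simp_all
    note rate = tuned_learning_rate[OF assms(1) this, folded \<eta>_def]
    have "(\<lambda>i. 1 / real N) \<in> pos_simplex N"
      using 3 by (simp add: pos_simplex_def prob_simplex_def)
    then have "(\<Sum>t<T. ln (dotp N u (x t))) - (\<Sum>t<T. ln (dotp N (eg_w N \<eta> x (\<lambda>i. 1 / real N) t) (x t)))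
        \<le> relent N u (\<lambda>i. 1 / real N) / \<eta> + real T * \<eta> / (2 * a\<^sup>2 * (1 - \<eta>))"
      using rate(1,2) 3 assms(1,2) x u by (intro eg_regret_bound) auto
    also have "\<dots> \<le> ln (real N) / \<eta> + real T * \<eta> / (2 * a\<^sup>2 * (1 - \<eta>))"
      using relent_uniform_le[OF u] rate(1) by (simp add: divide_right_mono)
    also have "\<dots> = sqrt (2 * real T * ln (real N)) / a + ln (real N)"
      using rate(3) .
    finally show ?thesis .
  qed
qed

theorem theorem5p2:
  fixes N T :: nat and a :: real and x :: "nat \<Rightarrow> nat \<Rightarrow> real"
  assumes "N \<ge> 1"
    and "0 < a" and "a \<le> 1"
    and "\<And>t i. t < T \<Longrightarrow> i < N \<Longrightarrow> a \<le> x t i \<and> x t i \<le> 1"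
    and "\<And>t. t < T \<Longrightarrow> Max (x t ` {..<N}) = 1"
  shows
    "(\<forall>w1 \<eta> u. w1 \<in> prob_simplex N \<and> (\<forall>i<N. 0 < w1 i) \<and> 0 < \<eta> \<and> \<eta> \<le> 1 \<and> u \<in> prob_simplex N \<longrightarrow>
        \<eta> = 1 \<or>
        (\<Sum>t<T. ln (dotp N u (x t))) - (\<Sum>t<T. ln (dotp N (eg_w N \<eta> x w1 t) (x t)))
          \<le> relent N u w1 / \<eta> + real T * \<eta> / (2 * a\<^sup>2 * (1 - \<eta>)))
     \<and>
     (let w1 = (\<lambda>i. 1 / real N);
          \<eta> = a * sqrt (2 * ln (real N)) / (a * sqrt (2 * ln (real N)) + sqrt (real T))
      in \<forall>u\<in>prob_simplex N.
        (\<Sum>t<T. ln (dotp N u (x t))) - (\<Sum>t<T. ln (dotp N (eg_w N \<eta> x w1 t) (x t)))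
          \<le> sqrt (2 * real T * ln (real N)) / a + ln (real N))"
  using eg_regret_bound[of _ a T N x] eg_regret_bound_tuned[OF assms(2-4)] assms(2-4)
  by (auto simp: pos_simplex_def Let_def order_le_less)

end
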